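(* Let $n\ge 1$ and let $G_1,G_2$ be $(n+1)$-partite graphs whose clique complexes $X(G_1),X(G_2)$ are pure $n$-dimensional, $(n+1)$-partite and strongly gallery connected. Then $X(G_1\circledast G_2)$ is also a pure $n$-dimensional, $(n+1)$-partite, strongly gallery connected clique complex.
   Context: An $(n+1)$-partite graph is a graph $G=(V,E)$ with an ordered tuple $(V^0,\ldots,V^n)$ of pairwise disjoint independent sets with union $V$. For $(n+1)$-partite graphs $G_1=((V_1^0,\ldots,V_1^n),E_1)$, $G_2=((V_2^0,\ldots,V_2^n),E_2)$, the partite product $G_1\circledast G_2$ has ordered parts $(V_1^0\times V_2^0,\ldots,V_1^n\times V_2^n)$, and for $i\ne j$, $(a,b)\in V_1^i\times V_2^i$ and $(c,d)\in V_1^j\times V_2^j$ are adjacent iff $\{a,c\}\in E_1$ and $\{b,d\}\in E_2$ (no edges inside a part). The clique complex $X(G)$ is the simplicial complex of cliques of $G$; it is $n$-dimensional if the largest clique has $n+1$ vertices, and pure if every clique is contained in a clique of size $n+1$. The link of a clique $C$ is the clique complex of the subgraph induced on the set of vertices adjacent to all vertices of $C$. $X$ is strongly gallery connected if its 1-skeleton (the graph $G$) is connected and the 1-skeleton of every link of dimension $\ge 1$ is connected. *)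

theory Defs
  imports Main
begin

definition graph :: "'a set \<Rightarrow> ('a \<Rightarrow> 'a \<Rightarrow> bool) \<Rightarrow> bool" where
  "graph V E \<longleftrightarrow> (\<forall>u v. E u v \<longrightarrow> u \<in> V \<and> v \<in> V \<and> u \<noteq> v \<and> E v u)"

definition partite_graph ::
  "nat \<Rightarrow> 'a set \<Rightarrow> ('a \<Rightarrow> 'a \<Rightarrow> bool) \<Rightarrow> (nat \<Rightarrow> 'a set) \<Rightarrow> bool" where
  "partite_graph m V E P \<longleftrightarrow>
     graph V E \<and>
     (\<forall>i<m. \<forall>j<m. i \<noteq> j \<longrightarrow> P i \<inter> P j = {}) \<and>
     (\<forall>i<m. \<forall>u\<in>P i. \<forall>v\<in>P i. \<not> E u v) \<and>
     (\<Union>i<m. P i) = V"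

text \<open>Simplices of the clique complex X(G): finite cliques of G.\<close>
definition clique :: "'a set \<Rightarrow> ('a \<Rightarrow> 'a \<Rightarrow> bool) \<Rightarrow> 'a set \<Rightarrow> bool" where
  "clique V E C \<longleftrightarrow> finite C \<and> C \<subseteq> V \<and> (\<forall>u\<in>C. \<forall>v\<in>C. u \<noteq> v \<longrightarrow> E u v)"

definition pure_dim :: "nat \<Rightarrow> 'a set \<Rightarrow> ('a \<Rightarrow> 'a \<Rightarrow> bool) \<Rightarrow> bool" where
  "pure_dim n V E \<longleftrightarrow>
     (\<exists>C. clique V E C \<and> card C = n + 1) \<and>
     (\<forall>C. clique V E C \<longrightarrow> card C \<le> n + 1) \<and>
     (\<forall>C. clique V E C \<longrightarrow> (\<exists>D. clique V E D \<and> C \<subseteq> D \<and> card D = n + 1))"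

text \<open>Vertex set of the link of a clique C: vertices adjacent to all vertices of C.
  The link is the clique complex of the induced subgraph on this set.\<close>
definition link_vertices :: "'a set \<Rightarrow> ('a \<Rightarrow> 'a \<Rightarrow> bool) \<Rightarrow> 'a set \<Rightarrow> 'a set" where
  "link_vertices V E C = {v \<in> V. \<forall>u\<in>C. E u v}"

definition dim_ge_1 :: "'a set \<Rightarrow> ('a \<Rightarrow> 'a \<Rightarrow> bool) \<Rightarrow> bool" where
  "dim_ge_1 W E \<longleftrightarrow> (\<exists>C. clique W E C \<and> card C \<ge> 2)"

definition graph_connected :: "'a set \<Rightarrow> ('a \<Rightarrow> 'a \<Rightarrow> bool) \<Rightarrow> bool" where
  "graph_connected W E \<longleftrightarrow>
     (\<forall>u\<in>W. \<forall>v\<in>W. (\<lambda>x y. x \<in> W \<and> y \<in> W \<and> E x y)\<^sup>*\<^sup>* u v)"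

definition strongly_gallery_connected :: "'a set \<Rightarrow> ('a \<Rightarrow> 'a \<Rightarrow> bool) \<Rightarrow> bool" where
  "strongly_gallery_connected V E \<longleftrightarrow>
     graph_connected V E \<and>
     (\<forall>C. clique V E C \<and> C \<noteq> {} \<and> dim_ge_1 (link_vertices V E C) E
        \<longrightarrow> graph_connected (link_vertices V E C) E)"

definition pprod_parts :: "(nat \<Rightarrow> 'a set) \<Rightarrow> (nat \<Rightarrow> 'b set) \<Rightarrow> nat \<Rightarrow> ('a \<times> 'b) set" where
  "pprod_parts P1 P2 i = P1 i \<times> P2 i"

definition pprod_vertices :: "nat \<Rightarrow> (nat \<Rightarrow> 'a set) \<Rightarrow> (nat \<Rightarrow> 'b set) \<Rightarrow> ('a \<times> 'b) set" where
  "pprod_vertices m P1 P2 = (\<Union>i<m. P1 i \<times> P2 i)"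

definition pprod_edges ::
  "nat \<Rightarrow> (nat \<Rightarrow> 'a set) \<Rightarrow> ('a \<Rightarrow> 'a \<Rightarrow> bool) \<Rightarrow> (nat \<Rightarrow> 'b set) \<Rightarrow> ('b \<Rightarrow> 'b \<Rightarrow> bool)
     \<Rightarrow> ('a \<times> 'b) \<Rightarrow> ('a \<times> 'b) \<Rightarrow> bool" where
  "pprod_edges m P1 E1 P2 E2 x y \<longleftrightarrow>
     (\<exists>i<m. \<exists>j<m. i \<noteq> j \<and> x \<in> P1 i \<times> P2 i \<and> y \<in> P1 j \<times> P2 j \<and>
        E1 (fst x) (fst y) \<and> E2 (snd x) (snd y))"

end

theory Submission
  imports Defs
begin

(* In a pure (n+1)-partite clique complex, strong gallery connectedness is equivalent to
   gallery connectedness of stars: for every clique C with fewer than n vertices, any two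
   facets containing C are joined by a sequence of facets containing C, consecutive ones
   sharing all but one vertex.  One direction is an induction on n - card C that walks along
   a path in the connected link of C; for the other, the vertices of a facet outside C are
   pairwise adjacent in the link of C, and at least two of them survive each step.
   Facets of the partite product are exactly the pairs of facets of the factors, matched part
   by part; so partiteness and purity transfer, and a gallery in the first factor followed by
   one in the second gives a gallery in the product. *)

text \<open>A facet of a pure (n+1)-partite complex, listed by parts: f i is its vertex in P i.\<close>
definition frame ::
  "nat \<Rightarrow> ('a \<Rightarrow> 'a \<Rightarrow> bool) \<Rightarrow> (nat \<Rightarrow> 'a set) \<Rightarrow> (nat \<Rightarrow> 'a) \<Rightarrow> bool"
where
  "frame n E P f \<longleftrightarrow> (\<forall>i\<le>n. f i \<in> P i) \<and> (\<forall>i\<le>n. \<forall>j\<le>n. i \<noteq> j \<longrightarrow> E (f i) (f j))"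

definition gallery_step ::
  "nat \<Rightarrow> ('a \<Rightarrow> 'a \<Rightarrow> bool) \<Rightarrow> (nat \<Rightarrow> 'a set) \<Rightarrow> 'a set
     \<Rightarrow> (nat \<Rightarrow> 'a) \<Rightarrow> (nat \<Rightarrow> 'a) \<Rightarrow> bool"
where
  "gallery_step n E P C f g \<longleftrightarrow>
     frame n E P f \<and> frame n E P g \<and> C \<subseteq> f ` {..n} \<and> C \<subseteq> g ` {..n} \<and>
     (\<exists>k\<le>n. \<forall>i\<le>n. i \<noteq> k \<longrightarrow> f i = g i)"

definition star_gallery_connected ::
  "nat \<Rightarrow> ('a \<Rightarrow> 'a \<Rightarrow> bool) \<Rightarrow> (nat \<Rightarrow> 'a set) \<Rightarrow> 'a set \<Rightarrow> bool"
where
  "star_gallery_connected n E P C \<longleftrightarrow>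
     (\<forall>f g. frame n E P f \<and> frame n E P g \<and> C \<subseteq> f ` {..n} \<and> C \<subseteq> g ` {..n}
        \<longrightarrow> (gallery_step n E P C)\<^sup>*\<^sup>* f g)"

lemma gallery_step_antimono:
  assumes "C \<subseteq> C'" and "(gallery_step n E P C')\<^sup>*\<^sup>* f g"
  shows "(gallery_step n E P C)\<^sup>*\<^sup>* f g"
proof -
  have "gallery_step n E P C' \<le> gallery_step n E P C"
    using assms(1) unfolding gallery_step_def by blast
  then show ?thesis using assms(2) rtranclp_mono by blast
qed

lemma rtranclp_map:
  assumes "r\<^sup>*\<^sup>* a b" and "\<And>a b. r a b \<Longrightarrow> s (\<phi> a) (\<phi> b)"
  shows "s\<^sup>*\<^sup>* (\<phi> a) (\<phi> b)"
  using assms(1) by induction (auto intro: rtranclp.rtrancl_into_rtrancl assms(2))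

lemma card_outside_image:
  assumes "inj_on f {..n::nat}" and "C \<subseteq> f ` {..n}"
  shows "card {i. i \<le> n \<and> f i \<notin> C} + card C = n + 1"
proof -
  let ?out = "{i. i \<le> n \<and> f i \<notin> C}" and ?in = "{i. i \<le> n \<and> f i \<in> C}"
  have "C = f ` ?in" using assms(2) by auto
  moreover have "inj_on f ?in" using assms(1) by (rule inj_on_subset) auto
  ultimately have "card C = card ?in" by (metis card_image)
  moreover have "{..n} = ?out \<union> ?in" by auto
  then have "card {..n} = card ?out + card ?in" by (simp add: card_Un_disjoint disjoint_iff)
  ultimately show ?thesis by simp
qed

lemma graph_sym: "graph V E \<Longrightarrow> E u v \<Longrightarrow> E v u"
  unfolding graph_def by blast

lemma clique_insert:
  assumes "graph V E" and "clique V E C" and "v \<in> V" and "\<forall>u\<in>C. E u v"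
  shows "clique V E (insert v C)"
proof -
  have "\<forall>x\<in>insert v C. \<forall>y\<in>insert v C. x \<noteq> y \<longrightarrow> E x y"
    using assms(2,4) graph_sym[OF assms(1)] unfolding clique_def by blast
  then show ?thesis using assms(2,3) unfolding clique_def by simp
qed

lemma clique_Un_link:
  assumes "graph V E" and "clique V E C" and "clique (link_vertices V E C) E K"
  shows "clique V E (C \<union> K)" and "C \<inter> K = {}"
proof -
  have irrefl: "\<not> E u u" for u using assms(1) unfolding graph_def by blast
  have K: "finite K" "K \<subseteq> V" "\<forall>u\<in>C. \<forall>v\<in>K. E u v" "\<forall>u\<in>K. \<forall>v\<in>K. u \<noteq> v \<longrightarrow> E u v"
    using assms(3) unfolding clique_def link_vertices_def by auto
  then show "C \<inter> K = {}" using irrefl by blast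
  have "\<forall>x\<in>C \<union> K. \<forall>y\<in>C \<union> K. x \<noteq> y \<longrightarrow> E x y"
    using assms(2) K(3,4) graph_sym[OF assms(1)] unfolding clique_def by blast
  then show "clique V E (C \<union> K)" using assms(2) K(1,2) unfolding clique_def by simp
qed

lemma clique_image:
  assumes C: "clique V E C" and "graph V' E'" and "\<phi> ` C \<subseteq> V'"
    and hom: "\<And>x y. E x y \<Longrightarrow> E' (\<phi> x) (\<phi> y)"
  shows "clique V' E' (\<phi> ` C) \<and> inj_on \<phi> C"
proof -
  have edge: "E' (\<phi> x) (\<phi> y)" if "x \<in> C" "y \<in> C" "x \<noteq> y" for x y
    using C that hom unfolding clique_def by blast
  have "\<not> E' u u" for u using assms(2) unfolding graph_def by blast
  then have "inj_on \<phi> C" using edge unfolding inj_on_def by metis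
  moreover have "\<forall>a\<in>\<phi> ` C. \<forall>b\<in>\<phi> ` C. a \<noteq> b \<longrightarrow> E' a b" using edge by blast
  ultimately show ?thesis using C assms(3) unfolding clique_def by simp
qed

locale partite =
  fixes n :: nat and V :: "'a set" and E :: "'a \<Rightarrow> 'a \<Rightarrow> bool" and P :: "nat \<Rightarrow> 'a set"
  assumes partite_graph: "partite_graph (n + 1) V E P"
begin

lemma graph: "graph V E"
  using partite_graph unfolding partite_graph_def by blast

lemma edge_irrefl: "\<not> E u u"
  using graph unfolding graph_def by blast

lemma part_unique: "i \<le> n \<Longrightarrow> j \<le> n \<Longrightarrow> x \<in> P i \<Longrightarrow> x \<in> P j \<Longrightarrow> i = j"
  using partite_graph unfolding partite_graph_def by (auto simp: less_Suc_eq_le)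

lemma part_independent: "i \<le> n \<Longrightarrow> u \<in> P i \<Longrightarrow> v \<in> P i \<Longrightarrow> \<not> E u v"
  using partite_graph unfolding partite_graph_def by (auto simp: less_Suc_eq_le)

lemma vertex_iff_in_part: "x \<in> V \<longleftrightarrow> (\<exists>i\<le>n. x \<in> P i)"
  using partite_graph unfolding partite_graph_def by (auto simp: less_Suc_eq_le)

definition part_index :: "'a \<Rightarrow> nat" where
  "part_index x = (SOME i. i \<le> n \<and> x \<in> P i)"

lemma part_index: "x \<in> V \<Longrightarrow> part_index x \<le> n \<and> x \<in> P (part_index x)"
  unfolding part_index_def using vertex_iff_in_part by (metis (mono_tags, lifting) someI_ex)

lemma inj_on_part_index: "clique V E C \<Longrightarrow> inj_on part_index C"
  unfolding clique_def inj_on_def by (metis part_index part_independent subsetD)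

lemma clique_card_le: "clique V E C \<Longrightarrow> card C \<le> n + 1"
proof -
  assume C: "clique V E C"
  then have "part_index ` C \<subseteq> {..n}" using part_index unfolding clique_def by auto
  then have "card (part_index ` C) \<le> n + 1" by (metis card_atMost card_mono finite_atMost Suc_eq_plus1)
  then show ?thesis using card_image[OF inj_on_part_index[OF C]] by simp
qed

lemma clique_card_eq_frame_image:
  assumes D: "clique V E D" "card D = n + 1"
  shows "\<exists>f. frame n E P f \<and> D = f ` {..n}"
proof -
  have inj: "inj_on part_index D" using inj_on_part_index[OF D(1)] .
  have "part_index ` D \<subseteq> {..n}" using part_index D(1) unfolding clique_def by auto
  moreover have "card (part_index ` D) = card {..n}" using card_image[OF inj] D(2) by simp
  ultimately have "bij_betw part_index D {..n}"
    using inj by (simp add: bij_betw_def card_subset_eq)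
  then have bij: "bij_betw (the_inv_into D part_index) {..n} D"
    by (rule bij_betw_the_inv_into)
  define f where "f = the_inv_into D part_index"
  have fD: "f i \<in> D" and fP: "f i \<in> P i" if "i \<le> n" for i
  proof -
    show "f i \<in> D" using bij that unfolding f_def bij_betw_def by auto
    moreover have "part_index (f i) = i"
      using \<open>bij_betw part_index D {..n}\<close> that unfolding f_def bij_betw_def
      by (simp add: f_the_inv_into_f)
    ultimately show "f i \<in> P i" using part_index D(1) unfolding clique_def by (metis subsetD)
  qed
  have "frame n E P f"
    unfolding frame_def
  proof (intro conjI allI impI)
    fix i j assume "i \<le> n" "j \<le> n" "i \<noteq> j"
    then have "f i \<noteq> f j" using bij unfolding f_def bij_betw_def inj_on_def by auto
    then show "E (f i) (f j)" using D(1) fD \<open>i \<le> n\<close> \<open>j \<le> n\<close> unfolding clique_def by blast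
  qed (use fP in blast)
  moreover have "D = f ` {..n}" using bij unfolding f_def bij_betw_def by simp
  ultimately show ?thesis by blast
qed

lemma frame_inj: "frame n E P f \<Longrightarrow> inj_on f {..n}"
  unfolding frame_def inj_on_def using edge_irrefl by (metis atMost_iff)

lemma frame_index_unique:
  "frame n E P f \<Longrightarrow> i \<le> n \<Longrightarrow> x \<in> P i \<Longrightarrow> x \<in> f ` {..n} \<Longrightarrow> x = f i"
  unfolding frame_def using part_unique by auto

lemma frame_image_clique: "frame n E P f \<Longrightarrow> clique V E (f ` {..n})"
  unfolding frame_def clique_def using vertex_iff_in_part by auto

lemma frame_free_in_link:
  assumes f: "frame n E P f" and C: "C \<subseteq> f ` {..n}" and i: "i \<le> n" "f i \<notin> C"
  shows "f i \<in> link_vertices V E C"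
proof -
  have "E u (f i)" if "u \<in> C" for u
  proof -
    obtain j where "j \<le> n" "u = f j" using C \<open>u \<in> C\<close> by auto
    moreover have "j \<noteq> i" using i(2) \<open>u \<in> C\<close> calculation(2) by auto
    ultimately show ?thesis using f i(1) unfolding frame_def by blast
  qed
  moreover have "f i \<in> V" using frame_image_clique[OF f] i(1) unfolding clique_def by auto
  ultimately show ?thesis unfolding link_vertices_def by blast
qed

lemma frame_free_index_avoiding:
  assumes "frame n E P f" and "C \<subseteq> f ` {..n}" and "card C < n"
  obtains j where "j \<le> n" and "j \<noteq> k" and "f j \<notin> C"
proof -
  let ?free = "{i. i \<le> n \<and> f i \<notin> C}"
  have two: "card ?free \<ge> 2"
    using card_outside_image[OF frame_inj[OF assms(1)] assms(2)] assms(3) by simp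
  have "\<not> ?free \<subseteq> {k}"
  proof
    assume "?free \<subseteq> {k}"
    then have "card ?free \<le> 1" using card_mono[of "{k}" ?free] by simp
    then show False using two by simp
  qed
  then show ?thesis using that by blast
qed

lemma pure_dim_iff_frames:
  "pure_dim n V E \<longleftrightarrow> (\<forall>C. clique V E C \<longrightarrow> (\<exists>f. frame n E P f \<and> C \<subseteq> f ` {..n}))"
proof
  assume pure: "pure_dim n V E"
  show "\<forall>C. clique V E C \<longrightarrow> (\<exists>f. frame n E P f \<and> C \<subseteq> f ` {..n})"
  proof (intro allI impI)
    fix C assume "clique V E C"
    then obtain D where "clique V E D" "C \<subseteq> D" "card D = n + 1"
      using pure unfolding pure_dim_def by blast
    then show "\<exists>f. frame n E P f \<and> C \<subseteq> f ` {..n}"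
      using clique_card_eq_frame_image by blast
  qed
next
  assume frames: "\<forall>C. clique V E C \<longrightarrow> (\<exists>f. frame n E P f \<and> C \<subseteq> f ` {..n})"
  have facet: "clique V E (f ` {..n}) \<and> card (f ` {..n}) = n + 1" if "frame n E P f" for f
    using frame_image_clique[OF that] card_image[OF frame_inj[OF that]] by simp
  have "clique V E {}" unfolding clique_def by simp
  then obtain f where "frame n E P f" using frames by blast
  then show "pure_dim n V E"
    unfolding pure_dim_def using facet frames clique_card_le by blast
qed

end

locale pure_partite = partite +
  assumes pure_dim: "pure_dim n V E"
begin

lemma exists_frame: "clique V E C \<Longrightarrow> \<exists>f. frame n E P f \<and> C \<subseteq> f ` {..n}"
  using pure_dim pure_dim_iff_frames by blast

lemma frame_through_link_vertex:
  assumes "clique V E C" and "v \<in> link_vertices V E C"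
  obtains f k where "frame n E P f" and "C \<subseteq> f ` {..n}" and "k \<le> n" and "v = f k"
proof -
  have "clique V E (insert v C)"
    using clique_insert[OF graph assms(1)] assms(2) unfolding link_vertices_def by blast
  then obtain f where "frame n E P f" "insert v C \<subseteq> f ` {..n}" using exists_frame by blast
  then show ?thesis using that by blast
qed

lemma link_vertex_notin: "v \<in> link_vertices V E C \<Longrightarrow> v \<notin> C"
  unfolding link_vertices_def using edge_irrefl by blast

text \<open>The vertices of a facet outside C are pairwise adjacent in the link of C, and since
  card C < n at least two of them survive each gallery step; so along a gallery all of them
  stay in one component of the link.\<close>
lemma link_connected_if_star_gallery_connected:
  assumes C: "clique V E C" "card C < n" and galleries: "star_gallery_connected n E P C"
  shows "graph_connected (link_vertices V E C) E"
  unfolding graph_connected_def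
proof (intro ballI)
  let ?L = "link_vertices V E C"
  let ?R = "\<lambda>x y. x \<in> ?L \<and> y \<in> ?L \<and> E x y"
  fix x y assume x: "x \<in> ?L" and y: "y \<in> ?L"
  define reaches_free where "reaches_free f \<longleftrightarrow> (\<forall>i\<le>n. f i \<notin> C \<longrightarrow> ?R\<^sup>*\<^sup>* x (f i))" for f
  have free_adjacent: "?R (f i) (f j)"
    if "frame n E P f" "C \<subseteq> f ` {..n}" "i \<le> n" "j \<le> n" "i \<noteq> j" "f i \<notin> C" "f j \<notin> C" for f i j
    using that frame_free_in_link unfolding frame_def by blast
  obtain f k where f: "frame n E P f" "C \<subseteq> f ` {..n}" and k: "k \<le> n" "x = f k"
    using frame_through_link_vertex[OF C(1) x] .
  obtain g l where g: "frame n E P g" "C \<subseteq> g ` {..n}" and l: "l \<le> n" "y = g l"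
    using frame_through_link_vertex[OF C(1) y] .
  have init: "reaches_free f"
    unfolding reaches_free_def
  proof (intro allI impI)
    fix i assume i: "i \<le> n" "f i \<notin> C"
    show "?R\<^sup>*\<^sup>* x (f i)"
    proof (cases "i = k")
      case False
      then have "?R (f k) (f i)" using free_adjacent[OF f k(1) i(1)] link_vertex_notin[OF x] k(2) i(2) by blast
      then show ?thesis unfolding k(2) by (rule r_into_rtranclp)
    qed (use k in simp)
  qed
  have preserve: "reaches_free h'" if step: "gallery_step n E P C h h'" and reach: "reaches_free h" for h h'
  proof -
    obtain m where h: "frame n E P h" "C \<subseteq> h ` {..n}" and h': "frame n E P h'" "C \<subseteq> h' ` {..n}"
      and m: "\<forall>i\<le>n. i \<noteq> m \<longrightarrow> h i = h' i"
      using step unfolding gallery_step_def by blast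
    obtain j where j: "j \<le> n" "j \<noteq> m" "h j \<notin> C" using frame_free_index_avoiding[OF h C(2)] .
    then have reach_j: "?R\<^sup>*\<^sup>* x (h' j)" and free_j: "h' j \<notin> C"
      using reach m unfolding reaches_free_def by auto
    show ?thesis
      unfolding reaches_free_def
    proof (intro allI impI)
      fix i assume i: "i \<le> n" "h' i \<notin> C"
      show "?R\<^sup>*\<^sup>* x (h' i)"
      proof (cases "i = j")
        case False
        then have "?R (h' j) (h' i)" using free_adjacent[OF h' j(1) i(1)] free_j i(2) by blast
        with reach_j show ?thesis by (rule rtranclp.rtrancl_into_rtrancl)
      qed (use reach_j in simp)
    qed
  qed
  have "(gallery_step n E P C)\<^sup>*\<^sup>* f g"
    using galleries f g unfolding star_gallery_connected_def by blast
  then have "reaches_free g"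
  proof (induction rule: rtranclp_induct)
    case base
    show ?case using init .
  next
    case (step h h')
    then show ?case using preserve by blast
  qed
  then show "?R\<^sup>*\<^sup>* x y" using l link_vertex_notin[OF y] unfolding reaches_free_def by blast
qed

lemma link_connected_if_sgc:
  assumes sgc: "strongly_gallery_connected V E" and C: "clique V E C" "card C < n"
  shows "graph_connected (link_vertices V E C) E"
proof (cases "C = {}")
  case True
  then show ?thesis using sgc unfolding strongly_gallery_connected_def link_vertices_def by simp
next
  case False
  obtain f where f: "frame n E P f" "C \<subseteq> f ` {..n}" using exists_frame[OF C(1)] by blast
  obtain i where i: "i \<le> n" "f i \<notin> C" using frame_free_index_avoiding[OF f C(2)] by blast
  obtain j where j: "j \<le> n" "j \<noteq> i" "f j \<notin> C" using frame_free_index_avoiding[OF f C(2)] .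
  have "f i \<in> link_vertices V E C" "f j \<in> link_vertices V E C"
    using frame_free_in_link[OF f] i j by blast+
  moreover have "E (f i) (f j)" "E (f j) (f i)" using f(1) i(1) j unfolding frame_def by auto
  ultimately have "clique (link_vertices V E C) E {f i, f j}" unfolding clique_def by auto
  moreover have "card {f i, f j} = 2"
    using \<open>E (f i) (f j)\<close> edge_irrefl by (metis card_2_iff)
  ultimately have "dim_ge_1 (link_vertices V E C) E" unfolding dim_ge_1_def by (metis order_refl)
  then show ?thesis using sgc False C(1) unfolding strongly_gallery_connected_def by blast
qed

lemma star_gallery_connected_if_card_eq:
  assumes "card C = n"
  shows "star_gallery_connected n E P C"
  unfolding star_gallery_connected_def
proof (intro allI impI r_into_rtranclp)
  fix f g assume "frame n E P f \<and> frame n E P g \<and> C \<subseteq> f ` {..n} \<and> C \<subseteq> g ` {..n}"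
  then have f: "frame n E P f" "C \<subseteq> f ` {..n}" and g: "frame n E P g" "C \<subseteq> g ` {..n}" by auto
  have "card {i. i \<le> n \<and> f i \<notin> C} = 1"
    using card_outside_image[OF frame_inj[OF f(1)] f(2)] assms by simp
  then obtain k where k: "{i. i \<le> n \<and> f i \<notin> C} = {k}" by (auto simp: card_1_singleton_iff)
  have "f i = g i" if "i \<le> n" "i \<noteq> k" for i
  proof -
    have "f i \<in> C" using k that by blast
    moreover have "f i \<in> P i" using f(1) that(1) unfolding frame_def by blast
    ultimately show ?thesis using frame_index_unique[OF g(1) that(1)] g(2) by blast
  qed
  moreover have "k \<le> n" using k by blast
  ultimately show "gallery_step n E P C f g" unfolding gallery_step_def using f g by auto
qed

text \<open>Walk along a path in the link from a free vertex of f to one of g: consecutive vertices v, w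
  of the path lie in a common facet with C, which links the stars of C \<union> {v} and C \<union> {w}.\<close>
lemma star_gallery_connected_if_link_connected:
  assumes C: "clique V E C" "card C < n" and conn: "graph_connected (link_vertices V E C) E"
    and above: "\<And>v. v \<in> link_vertices V E C \<Longrightarrow> star_gallery_connected n E P (insert v C)"
  shows "star_gallery_connected n E P C"
  unfolding star_gallery_connected_def
proof (intro allI impI)
  let ?L = "link_vertices V E C"
  have above_C: "(gallery_step n E P C)\<^sup>*\<^sup>* h h'"
    if "v \<in> ?L" "frame n E P h" "frame n E P h'" "insert v C \<subseteq> h ` {..n}" "insert v C \<subseteq> h' ` {..n}"
    for v h h'
  proof -
    have "(gallery_step n E P (insert v C))\<^sup>*\<^sup>* h h'"
      using above[OF that(1)] that(2-) unfolding star_gallery_connected_def by blast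
    then show ?thesis by (rule gallery_step_antimono[OF subset_insertI])
  qed
  fix f g assume "frame n E P f \<and> frame n E P g \<and> C \<subseteq> f ` {..n} \<and> C \<subseteq> g ` {..n}"
  then have f: "frame n E P f" "C \<subseteq> f ` {..n}" and g: "frame n E P g" "C \<subseteq> g ` {..n}" by auto
  obtain i where i: "i \<le> n" "f i \<notin> C" using frame_free_index_avoiding[OF f C(2)] by blast
  obtain j where j: "j \<le> n" "g j \<notin> C" using frame_free_index_avoiding[OF g C(2)] by blast
  have x: "f i \<in> ?L" and y: "g j \<in> ?L"
    using frame_free_in_link[OF f i] frame_free_in_link[OF g j] by simp_all
  have "(\<lambda>a b. a \<in> ?L \<and> b \<in> ?L \<and> E a b)\<^sup>*\<^sup>* (f i) (g j)"
    using conn x y unfolding graph_connected_def by blast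
  then have "(gallery_step n E P C)\<^sup>*\<^sup>* f h" if "frame n E P h" "insert (g j) C \<subseteq> h ` {..n}" for h
    using that
  proof (induction arbitrary: h rule: rtranclp_induct)
    case base
    then show ?case using above_C[OF x f(1)] f(2) i(1) by blast
  next
    case (step v w h)
    have "clique V E (insert w C)"
      using clique_insert[OF graph C(1)] step.hyps(2) unfolding link_vertices_def by blast
    moreover have "v \<in> V" "\<forall>u\<in>insert w C. E u v"
      using step.hyps(2) graph_sym[OF graph] unfolding link_vertices_def by auto
    ultimately have "clique V E (insert v (insert w C))" by (rule clique_insert[OF graph])
    then obtain h' where h': "frame n E P h'" "insert v (insert w C) \<subseteq> h' ` {..n}"
      using exists_frame by blast
    have "(gallery_step n E P C)\<^sup>*\<^sup>* f h'" using step.IH[OF h'(1)] h'(2) by blast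
    moreover have "insert w C \<subseteq> h' ` {..n}" using h'(2) by blast
    then have "(gallery_step n E P C)\<^sup>*\<^sup>* h' h"
      using above_C[OF _ h'(1) step.prems(1)] step.hyps(2) step.prems(2) by blast
    ultimately show ?case by simp
  qed
  then show "(gallery_step n E P C)\<^sup>*\<^sup>* f g" using g j(1) by blast
qed

lemma star_gallery_connected_if_sgc:
  assumes sgc: "strongly_gallery_connected V E"
  shows "clique V E C \<Longrightarrow> card C \<le> n \<Longrightarrow> star_gallery_connected n E P C"
proof (induction "n - card C" arbitrary: C)
  case 0
  then show ?case using star_gallery_connected_if_card_eq by simp
next
  case (Suc m)
  then have card_C: "card C < n" by simp
  have "star_gallery_connected n E P (insert v C)" if v: "v \<in> link_vertices V E C" for v
  proof -
    have "clique V E (insert v C)"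
      using clique_insert[OF graph Suc.prems(1)] v unfolding link_vertices_def by blast
    moreover have "card (insert v C) = Suc (card C)"
      using link_vertex_notin[OF v] Suc.prems(1) unfolding clique_def by simp
    ultimately show ?thesis using Suc.hyps card_C by simp
  qed
  then show ?case
    using star_gallery_connected_if_link_connected[OF Suc.prems(1) card_C
        link_connected_if_sgc[OF sgc Suc.prems(1) card_C]] by blast
qed

lemma sgc_if_star_gallery_connected:
  assumes "n \<ge> 1"
    and galleries: "\<And>C. clique V E C \<Longrightarrow> card C < n \<Longrightarrow> star_gallery_connected n E P C"
  shows "strongly_gallery_connected V E"
  unfolding strongly_gallery_connected_def
proof (intro conjI allI impI)
  have empty: "clique V E {}" "card {} < n" using assms(1) by (simp_all add: clique_def)
  have "link_vertices V E {} = V" by (simp add: link_vertices_def)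
  then show "graph_connected V E"
    using link_connected_if_star_gallery_connected[OF empty galleries[OF empty]] by simp
next
  fix C assume "clique V E C \<and> C \<noteq> {} \<and> dim_ge_1 (link_vertices V E C) E"
  then obtain K where C: "clique V E C" and K: "clique (link_vertices V E C) E K" "card K \<ge> 2"
    unfolding dim_ge_1_def by blast
  have "card C + card K = card (C \<union> K)"
    using clique_Un_link(2)[OF graph C K(1)] C K(1) unfolding clique_def by (simp add: card_Un_disjoint)
  also have "\<dots> \<le> n + 1" using clique_card_le[OF clique_Un_link(1)[OF graph C K(1)]] .
  finally have "card C < n" using K(2) by simp
  then show "graph_connected (link_vertices V E C) E"
    using link_connected_if_star_gallery_connected[OF C] galleries[OF C] by blast
qed

end


lemma pprod_edges_components:
  "pprod_edges m P1 E1 P2 E2 x y \<Longrightarrow> E1 (fst x) (fst y) \<and> E2 (snd x) (snd y)"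
  unfolding pprod_edges_def by blast

lemma frame_pair_iff:
  "frame n (pprod_edges (n + 1) P1 E1 P2 E2) (pprod_parts P1 P2) (\<lambda>i. (f i, g i))
     \<longleftrightarrow> frame n E1 P1 f \<and> frame n E2 P2 g"
proof
  assume F: "frame n (pprod_edges (n + 1) P1 E1 P2 E2) (pprod_parts P1 P2) (\<lambda>i. (f i, g i))"
  have "f i \<in> P1 i \<and> g i \<in> P2 i" if "i \<le> n" for i
    using F that unfolding frame_def pprod_parts_def by auto
  moreover have "E1 (f i) (f j) \<and> E2 (g i) (g j)" if "i \<le> n" "j \<le> n" "i \<noteq> j" for i j
    using F that pprod_edges_components[of "n + 1" P1 E1 P2 E2 "(f i, g i)" "(f j, g j)"]
    unfolding frame_def by auto
  ultimately show "frame n E1 P1 f \<and> frame n E2 P2 g" unfolding frame_def by blast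
next
  assume F: "frame n E1 P1 f \<and> frame n E2 P2 g"
  show "frame n (pprod_edges (n + 1) P1 E1 P2 E2) (pprod_parts P1 P2) (\<lambda>i. (f i, g i))"
    unfolding frame_def
  proof (intro conjI allI impI)
    fix i assume "i \<le> n"
    then show "(f i, g i) \<in> pprod_parts P1 P2 i" using F unfolding frame_def pprod_parts_def by simp
  next
    fix i j assume ij: "i \<le> n" "j \<le> n" "i \<noteq> j"
    then have "i < n + 1" "j < n + 1" "(f i, g i) \<in> P1 i \<times> P2 i" "(f j, g j) \<in> P1 j \<times> P2 j"
      "E1 (f i) (f j)" "E2 (g i) (g j)"
      using F unfolding frame_def by simp_all
    then show "pprod_edges (n + 1) P1 E1 P2 E2 (f i, g i) (f j, g j)"
      unfolding pprod_edges_def fst_conv snd_conv using ij(3) by blast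
  qed
qed

locale pure_partite_product =
  G1: pure_partite n V1 E1 P1 + G2: pure_partite n V2 E2 P2
  for n :: nat and V1 :: "'a set" and E1 P1 and V2 :: "'b set" and E2 P2
begin

abbreviation "Vp \<equiv> pprod_vertices (n + 1) P1 P2"
abbreviation "Ep \<equiv> pprod_edges (n + 1) P1 E1 P2 E2"
abbreviation "Pp \<equiv> pprod_parts P1 P2"

lemma pprod_vertex_iff: "x \<in> Vp \<longleftrightarrow> (\<exists>i\<le>n. fst x \<in> P1 i \<and> snd x \<in> P2 i)"
  by (cases x) (auto simp: pprod_vertices_def less_Suc_eq_le)

lemma pprod_edge_iff:
  "Ep x y \<longleftrightarrow> (\<exists>i\<le>n. \<exists>j\<le>n. i \<noteq> j \<and> fst x \<in> P1 i \<and> snd x \<in> P2 i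
     \<and> fst y \<in> P1 j \<and> snd y \<in> P2 j \<and> E1 (fst x) (fst y) \<and> E2 (snd x) (snd y))"
  unfolding pprod_edges_def by (auto simp: less_Suc_eq_le mem_Times_iff)

lemma partite_pprod: "partite_graph (n + 1) Vp Ep Pp"
  unfolding partite_graph_def
proof (intro conjI)
  show "graph Vp Ep"
    unfolding graph_def
  proof (intro allI impI conjI)
    fix x y assume "Ep x y"
    then obtain i j where ij: "i \<le> n" "j \<le> n" "i \<noteq> j" "fst x \<in> P1 i" "snd x \<in> P2 i"
      "fst y \<in> P1 j" "snd y \<in> P2 j" "E1 (fst x) (fst y)" "E2 (snd x) (snd y)"
      unfolding pprod_edge_iff by blast
    show "x \<in> Vp" "y \<in> Vp" unfolding pprod_vertex_iff using ij by blast+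
    show "x \<noteq> y" using ij(8) G1.edge_irrefl by blast
    show "Ep y x"
      unfolding pprod_edge_iff using ij graph_sym[OF G1.graph] graph_sym[OF G2.graph] by blast
  qed
  show "\<forall>i<n + 1. \<forall>j<n + 1. i \<noteq> j \<longrightarrow> Pp i \<inter> Pp j = {}"
  proof (intro allI impI)
    fix i j assume "i < n + 1" "j < n + 1" "i \<noteq> j"
    then show "Pp i \<inter> Pp j = {}"
      unfolding pprod_parts_def using G1.part_unique[of i j] by auto
  qed
  show "\<forall>i<n + 1. \<forall>u\<in>Pp i. \<forall>v\<in>Pp i. \<not> Ep u v"
  proof (intro allI impI ballI notI)
    fix i u v assume "i < n + 1" "u \<in> Pp i" "v \<in> Pp i" "Ep u v"
    then obtain i' j' where "i \<le> n" "i' \<le> n" "j' \<le> n" "i' \<noteq> j'"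
      "fst u \<in> P1 i" "fst v \<in> P1 i" "fst u \<in> P1 i'" "fst v \<in> P1 j'"
      unfolding pprod_parts_def pprod_edge_iff by (auto simp: mem_Times_iff)
    then show False using G1.part_unique by metis
  qed
  show "(\<Union>i<n + 1. Pp i) = Vp"
    unfolding pprod_parts_def pprod_vertices_def by simp
qed

sublocale Prod: partite n Vp Ep Pp
  by unfold_locales (rule partite_pprod)

lemma clique_pprod_fst:
  assumes C: "clique Vp Ep C"
  shows "clique V1 E1 (fst ` C) \<and> inj_on fst C"
proof (rule clique_image[OF C G1.graph])
  show "fst ` C \<subseteq> V1" using C pprod_vertex_iff G1.vertex_iff_in_part unfolding clique_def by blast
qed (use pprod_edges_components in blast)

lemma clique_pprod_snd:
  assumes C: "clique Vp Ep C"
  shows "clique V2 E2 (snd ` C) \<and> inj_on snd C"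
proof (rule clique_image[OF C G2.graph])
  show "snd ` C \<subseteq> V2" using C pprod_vertex_iff G2.vertex_iff_in_part unfolding clique_def by blast
qed (use pprod_edges_components in blast)

lemma clique_pprod_subset_pair:
  assumes C: "clique Vp Ep C" and f: "frame n E1 P1 f" "fst ` C \<subseteq> f ` {..n}"
    and g: "frame n E2 P2 g" "snd ` C \<subseteq> g ` {..n}"
  shows "C \<subseteq> (\<lambda>i. (f i, g i)) ` {..n}"
proof
  fix c assume "c \<in> C"
  then have "c \<in> Vp" using C unfolding clique_def by blast
  then obtain i where i: "i \<le> n" "fst c \<in> P1 i" "snd c \<in> P2 i" unfolding pprod_vertex_iff by blast
  have "fst c = f i" using G1.frame_index_unique[OF f(1) i(1,2)] f(2) \<open>c \<in> C\<close> by blast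
  moreover have "snd c = g i" using G2.frame_index_unique[OF g(1) i(1,3)] g(2) \<open>c \<in> C\<close> by blast
  ultimately have "c = (f i, g i)" by (simp add: prod_eq_iff)
  then show "c \<in> (\<lambda>i. (f i, g i)) ` {..n}" using i(1) by simp
qed

lemma pure_dim_pprod: "pure_dim n Vp Ep"
  unfolding Prod.pure_dim_iff_frames
proof (intro allI impI)
  fix C assume C: "clique Vp Ep C"
  obtain f where f: "frame n E1 P1 f" "fst ` C \<subseteq> f ` {..n}"
    using G1.exists_frame clique_pprod_fst[OF C] by blast
  obtain g where g: "frame n E2 P2 g" "snd ` C \<subseteq> g ` {..n}"
    using G2.exists_frame clique_pprod_snd[OF C] by blast
  have "frame n Ep Pp (\<lambda>i. (f i, g i))" using frame_pair_iff f(1) g(1) by blast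
  moreover have "C \<subseteq> (\<lambda>i. (f i, g i)) ` {..n}" using clique_pprod_subset_pair[OF C f g] .
  ultimately show "\<exists>h. frame n Ep Pp h \<and> C \<subseteq> h ` {..n}" by blast
qed

sublocale Prod: pure_partite n Vp Ep Pp
  by unfold_locales (rule pure_dim_pprod)

lemma gallery_step_pair_fst:
  assumes C: "clique Vp Ep C" and g: "frame n E2 P2 g" "snd ` C \<subseteq> g ` {..n}"
    and step: "gallery_step n E1 P1 (fst ` C) f f'"
  shows "gallery_step n Ep Pp C (\<lambda>i. (f i, g i)) (\<lambda>i. (f' i, g i))"
proof -
  obtain k where f: "frame n E1 P1 f" "fst ` C \<subseteq> f ` {..n}"
    and f': "frame n E1 P1 f'" "fst ` C \<subseteq> f' ` {..n}" and k: "k \<le> n" "\<forall>i\<le>n. i \<noteq> k \<longrightarrow> f i = f' i"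
    using step unfolding gallery_step_def by blast
  have "\<forall>i\<le>n. i \<noteq> k \<longrightarrow> (f i, g i) = (f' i, g i)" using k(2) by simp
  then show ?thesis
    unfolding gallery_step_def frame_pair_iff
    using f(1) f'(1) g(1) clique_pprod_subset_pair[OF C f g] clique_pprod_subset_pair[OF C f' g] k(1)
    by blast
qed

lemma gallery_step_pair_snd:
  assumes C: "clique Vp Ep C" and f: "frame n E1 P1 f" "fst ` C \<subseteq> f ` {..n}"
    and step: "gallery_step n E2 P2 (snd ` C) g g'"
  shows "gallery_step n Ep Pp C (\<lambda>i. (f i, g i)) (\<lambda>i. (f i, g' i))"
proof -
  obtain k where g: "frame n E2 P2 g" "snd ` C \<subseteq> g ` {..n}"
    and g': "frame n E2 P2 g'" "snd ` C \<subseteq> g' ` {..n}" and k: "k \<le> n" "\<forall>i\<le>n. i \<noteq> k \<longrightarrow> g i = g' i"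
    using step unfolding gallery_step_def by blast
  have "\<forall>i\<le>n. i \<noteq> k \<longrightarrow> (f i, g i) = (f i, g' i)" using k(2) by simp
  then show ?thesis
    unfolding gallery_step_def frame_pair_iff
    using f(1) g(1) g'(1) clique_pprod_subset_pair[OF C f g] clique_pprod_subset_pair[OF C f g'] k(1)
    by blast
qed

lemma star_gallery_connected_pprod:
  assumes sgc1: "strongly_gallery_connected V1 E1" and sgc2: "strongly_gallery_connected V2 E2"
    and C: "clique Vp Ep C" "card C \<le> n"
  shows "star_gallery_connected n Ep Pp C"
  unfolding star_gallery_connected_def
proof (intro allI impI)
  fix h h' assume "frame n Ep Pp h \<and> frame n Ep Pp h' \<and> C \<subseteq> h ` {..n} \<and> C \<subseteq> h' ` {..n}"
  then have h: "frame n Ep Pp h" "frame n Ep Pp h'" "C \<subseteq> h ` {..n}" "C \<subseteq> h' ` {..n}" by auto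
  define f g f' g' where "f i = fst (h i)" and "g i = snd (h i)" and "f' i = fst (h' i)" and "g' i = snd (h' i)"
    for i
  have hh: "h = (\<lambda>i. (f i, g i))" "h' = (\<lambda>i. (f' i, g' i))" by (simp_all add: f_def g_def f'_def g'_def)
  have frames: "frame n E1 P1 f" "frame n E2 P2 g" "frame n E1 P1 f'" "frame n E2 P2 g'"
    using h(1,2) unfolding hh frame_pair_iff by blast+
  have covers: "fst ` C \<subseteq> f ` {..n}" "snd ` C \<subseteq> g ` {..n}" "fst ` C \<subseteq> f' ` {..n}" "snd ` C \<subseteq> g' ` {..n}"
    using h(3,4) unfolding hh by force+
  have "clique V1 E1 (fst ` C)" "card (fst ` C) \<le> n"
    using clique_pprod_fst[OF C(1)] C(2) by (simp_all add: card_image)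
  then have "(gallery_step n E1 P1 (fst ` C))\<^sup>*\<^sup>* f f'"
    using G1.star_gallery_connected_if_sgc[OF sgc1] frames(1,3) covers(1,3)
    unfolding star_gallery_connected_def by blast
  then have first: "(gallery_step n Ep Pp C)\<^sup>*\<^sup>* (\<lambda>i. (f i, g i)) (\<lambda>i. (f' i, g i))"
    by (rule rtranclp_map[where \<phi> = "\<lambda>a i. (a i, g i)"])
      (rule gallery_step_pair_fst[OF C(1) frames(2) covers(2)])
  have "clique V2 E2 (snd ` C)" "card (snd ` C) \<le> n"
    using clique_pprod_snd[OF C(1)] C(2) by (simp_all add: card_image)
  then have "(gallery_step n E2 P2 (snd ` C))\<^sup>*\<^sup>* g g'"
    using G2.star_gallery_connected_if_sgc[OF sgc2] frames(2,4) covers(2,4)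
    unfolding star_gallery_connected_def by blast
  then have "(gallery_step n Ep Pp C)\<^sup>*\<^sup>* (\<lambda>i. (f' i, g i)) (\<lambda>i. (f' i, g' i))"
    by (rule rtranclp_map[where \<phi> = "\<lambda>b i. (f' i, b i)"])
      (rule gallery_step_pair_snd[OF C(1) frames(3) covers(3)])
  with first show "(gallery_step n Ep Pp C)\<^sup>*\<^sup>* h h'" unfolding hh by (rule rtranclp_trans)
qed

lemma sgc_pprod:
  assumes "n \<ge> 1" and "strongly_gallery_connected V1 E1" and "strongly_gallery_connected V2 E2"
  shows "strongly_gallery_connected Vp Ep"
  using Prod.sgc_if_star_gallery_connected[OF assms(1)] star_gallery_connected_pprod[OF assms(2,3)]
  by (simp add: less_imp_le)

end

theorem claim2p1:
  fixes n :: nat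
    and V1 :: "'a set" and E1 :: "'a \<Rightarrow> 'a \<Rightarrow> bool" and P1 :: "nat \<Rightarrow> 'a set"
    and V2 :: "'b set" and E2 :: "'b \<Rightarrow> 'b \<Rightarrow> bool" and P2 :: "nat \<Rightarrow> 'b set"
  assumes "n \<ge> 1"
    and "partite_graph (n + 1) V1 E1 P1"
    and "partite_graph (n + 1) V2 E2 P2"
    and "pure_dim n V1 E1"
    and "pure_dim n V2 E2"
    and "strongly_gallery_connected V1 E1"
    and "strongly_gallery_connected V2 E2"
  shows "partite_graph (n + 1) (pprod_vertices (n + 1) P1 P2)
           (pprod_edges (n + 1) P1 E1 P2 E2) (pprod_parts P1 P2)
       \<and> pure_dim n (pprod_vertices (n + 1) P1 P2) (pprod_edges (n + 1) P1 E1 P2 E2)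
       \<and> strongly_gallery_connected (pprod_vertices (n + 1) P1 P2)
           (pprod_edges (n + 1) P1 E1 P2 E2)"
proof -
  interpret pure_partite_product n V1 E1 P1 V2 E2 P2
    by (intro pure_partite_product.intro pure_partite.intro partite.intro pure_partite_axioms.intro)
      (fact assms)+
  show ?thesis
    using partite_pprod pure_dim_pprod sgc_pprod[OF assms(1,6,7)] by blast
qed

end
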